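(* Let $\Omega\subset\mathbb{R}^p$ be a domain, $f\in AP(T_\Omega)$, $f\not\equiv0$, let $D_0$ be a connected component of $\Omega\setminus A_f$ and let $D'_0\Subset D_0$. Then there is $\beta>0$ with $|f(z)|\ge\beta$ for all $z\in T_{D'_0}$.
   Context: $T_\Omega=\{x+iy:\ x\in\mathbb{R}^p,\ y\in\Omega\}$. $AP(T_\Omega)$ is the class of holomorphic $f$ on $T_\Omega$ whose translates $\{f(z+t)\}_{t\in\mathbb{R}^p}$ form a relatively compact family in the topology of uniform convergence on every $T_D$, $D\Subset\Omega$. The amoeba $A_f$ is the closure in $\Omega$ of $\{y\in\Omega:\ \exists x\in\mathbb{R}^p,\ f(x+iy)=0\}$. *)

theory Defs
  imports "HOL-Analysis.Analysis"
begin

text \<open>Points of C^p are vectors complex^'n; the index type 'n (finite) plays the role of {1..p}.\<close>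

definition re_part :: "complex^'n \<Rightarrow> real^'n" where
  "re_part z = (\<chi> i. Re (z $ i))"

definition im_part :: "complex^'n \<Rightarrow> real^'n" where
  "im_part z = (\<chi> i. Im (z $ i))"

definition cvec :: "real^'n \<Rightarrow> real^'n \<Rightarrow> complex^'n" where
  "cvec x y = (\<chi> i. Complex (x $ i) (y $ i))"

definition tube :: "(real^'n) set \<Rightarrow> (complex^'n) set" where
  "tube \<Omega> = {z. im_part z \<in> \<Omega>}"

definition holomorphic_several :: "(complex^'n \<Rightarrow> complex) \<Rightarrow> (complex^'n) set \<Rightarrow> bool" where
  "holomorphic_several f U \<longleftrightarrow> open U \<and>
     (\<forall>z\<in>U. \<exists>L. (f has_derivative L) (at z) \<and> (\<forall>c v. L (c *s v) = c * L v))"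

definition compactly_contained :: "'a::topological_space set \<Rightarrow> 'a set \<Rightarrow> bool" (infix "\<Subset>" 50) where
  "D \<Subset> \<Omega> \<longleftrightarrow> compact (closure D) \<and> closure D \<subseteq> \<Omega>"

definition rtrans :: "complex^'n \<Rightarrow> real^'n \<Rightarrow> complex^'n" where
  "rtrans z t = z + (\<chi> i. complex_of_real (t $ i))"

text \<open>AP(T_Omega): holomorphic, and the family of real translates is relatively compact
  in the (metrizable) topology of uniform convergence on every T_D with D compactly contained
  in Omega; expressed via sequential relative compactness.\<close>
definition AP :: "(real^'n) set \<Rightarrow> (complex^'n \<Rightarrow> complex) set" where
  "AP \<Omega> = {f. holomorphic_several f (tube \<Omega>) \<and>
     (\<forall>t :: nat \<Rightarrow> real^'n. \<exists>r g. strict_mono r \<and>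
        (\<forall>D. D \<Subset> \<Omega> \<longrightarrow>
           uniform_limit (tube D) (\<lambda>n z. f (rtrans z (t (r n)))) g sequentially))}"

definition amoeba :: "(real^'n) set \<Rightarrow> (complex^'n \<Rightarrow> complex) \<Rightarrow> (real^'n) set" where
  "amoeba \<Omega> f = closure {y \<in> \<Omega>. \<exists>x. f (cvec x y) = 0} \<inter> \<Omega>"

end

theory Submission
  imports Defs "HOL-Complex_Analysis.Complex_Analysis"
begin

text \<open>If |f| had no positive lower bound on T_K, K compact inside a zero-free region D of the
  amoeba complement, there would be points z_n of T_K with f(z_n) -> 0 and, after passing to a
  subsequence, Im z_n -> y in D. Almost periodicity gives a further subsequence along which the
  real translates f(. + Re z_n) converge uniformly on T_B, B a ball about y inside D, to some g,
  and then g(iy) = 0. The translates have no zeros on T_B, so Hurwitz's theorem on the complex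
  lines through iy forces g = 0 on T_B. But on T_B the translates take exactly the values of f,
  so f would vanish on T_B.\<close>

lemma im_part_cvec [simp]: "im_part (cvec x y) = y"
  by (simp add: im_part_def cvec_def vec_eq_iff)

lemma cvec_re_part_im_part [simp]: "cvec (re_part z) (im_part z) = z"
  by (simp add: re_part_def im_part_def cvec_def vec_eq_iff complex_eq_iff)

lemma rtrans_cvec_0: "rtrans (cvec 0 y) x = cvec x y"
  by (simp add: rtrans_def cvec_def vec_eq_iff complex_eq_iff)

lemma rtrans_rtrans [simp]: "rtrans (rtrans z t) s = rtrans z (t + s)"
  by (simp add: rtrans_def vec_eq_iff)

lemma rtrans_0 [simp]: "rtrans z 0 = z"
  by (simp add: rtrans_def vec_eq_iff)

lemma rtrans_in_tube_iff [simp]: "rtrans z t \<in> tube S \<longleftrightarrow> z \<in> tube S"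
  by (simp add: tube_def im_part_def rtrans_def)

lemma tube_mono: "A \<subseteq> B \<Longrightarrow> tube A \<subseteq> tube B"
  by (auto simp: tube_def)

lemma linear_im_part: "linear im_part"
  by (simp add: linear_iff im_part_def vec_eq_iff)

lemma tube_eq_vimage: "tube B = im_part -` B"
  by (auto simp: tube_def)

lemma open_tube: "open B \<Longrightarrow> open (tube B)"
  unfolding tube_eq_vimage
  by (intro open_vimage linear_continuous_on) (simp_all add: linear_im_part linear_conv_bounded_linear[symmetric])

lemma convex_tube: "convex B \<Longrightarrow> convex (tube B)"
  unfolding tube_eq_vimage by (rule convex_linear_vimage[OF linear_im_part])

lemma holomorphic_several_imp_continuous_on:
  "holomorphic_several f U \<Longrightarrow> continuous_on U f"
  unfolding holomorphic_several_def
  by (meson continuous_at_imp_continuous_on has_derivative_continuous)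

lemma holomorphic_several_shift:
  assumes "holomorphic_several f U" "open V" "\<And>z. z \<in> V \<Longrightarrow> z + c \<in> U"
  shows "holomorphic_several (\<lambda>z. f (z + c)) V"
  unfolding holomorphic_several_def
proof (intro conjI ballI \<open>open V\<close>)
  fix z assume "z \<in> V"
  then obtain L where "(f has_derivative L) (at (z + c))" "\<forall>a w. L (a *s w) = a * L w"
    using assms(1,3) unfolding holomorphic_several_def by blast
  then show "\<exists>L. ((\<lambda>z. f (z + c)) has_derivative L) (at z) \<and> (\<forall>a w. L (a *s w) = a * L w)"
    using has_derivative_compose[OF has_derivative_add_const[OF has_derivative_ident]] by blast
qed

lemma norm_smult_vec: "norm ((c::complex) *s (v::complex^'n)) = norm c * norm v"
  by (simp add: norm_vec_def L2_set_right_distrib norm_mult)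

lemma bounded_linear_smult_vec: "bounded_linear (\<lambda>c::complex. c *s (v::complex^'n))"
  by (rule bounded_linear_intro[where K="norm v"])
     (auto simp: vec_eq_iff algebra_simps norm_smult_vec)

lemma open_line_preimage:
  fixes C :: "(complex^'n) set"
  assumes "open C" shows "open {l. p + l *s v \<in> C}"
proof -
  have "continuous_on UNIV (\<lambda>l. p + l *s v)"
    by (intro continuous_intros linear_continuous_on bounded_linear_smult_vec)
  then show ?thesis
    using open_vimage[OF assms] by (simp add: vimage_def)
qed

lemma convex_line_preimage:
  fixes C :: "(complex^'n) set"
  assumes "convex C" shows "convex {l. p + l *s v \<in> C}"
proof -
  have "{l. p + l *s v \<in> C} = (\<lambda>l. l *s v) -` ((\<lambda>x. x - p) ` C)"
    by (force simp: algebra_simps)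
  then show ?thesis
    using convex_linear_vimage[OF bounded_linear.linear[OF bounded_linear_smult_vec]]
      convex_translation_subtract[OF assms] by metis
qed

lemma holomorphic_on_line:
  assumes "holomorphic_several f U" "\<And>l. l \<in> L \<Longrightarrow> p + l *s v \<in> U"
  shows "(\<lambda>l. f (p + l *s v)) holomorphic_on L"
  unfolding holomorphic_on_def
proof
  fix l assume "l \<in> L"
  then obtain D where D: "(f has_derivative D) (at (p + l *s v))" and lin: "\<forall>c w. D (c *s w) = c * D w"
    using assms unfolding holomorphic_several_def by blast
  have "((\<lambda>l. p + l *s v) has_derivative (\<lambda>c. c *s v)) (at l)"
    using has_derivative_add[OF has_derivative_const[of p]
        bounded_linear_imp_has_derivative[OF bounded_linear_smult_vec]] by simp
  from has_derivative_compose[OF this D]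
  have "((\<lambda>l. f (p + l *s v)) has_field_derivative D v) (at l)"
    unfolding has_field_derivative_def using lin by (simp add: mult.commute[of _ "D v"])
  then show "(\<lambda>l. f (p + l *s v)) field_differentiable at l within L"
    using field_differentiable_at_within field_differentiable_def by blast
qed

lemma Hurwitz_convex_vanishes:
  fixes F :: "nat \<Rightarrow> complex^'n \<Rightarrow> complex"
  assumes "open C" "convex C"
    and hol: "\<And>n. holomorphic_several (F n) C"
    and nz: "\<And>n z. z \<in> C \<Longrightarrow> F n z \<noteq> 0"
    and ul: "uniform_limit C F g sequentially"
    and "w \<in> C" "g w = 0" "u \<in> C"
  shows "g u = 0"
proof -
  define L where "L = {l. w + l *s (u - w) \<in> C}"
  define G where "G l = g (w + l *s (u - w))" for l
  have "open L"
    unfolding L_def by (rule open_line_preimage[OF assms(1)])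
  have "connected L"
    unfolding L_def by (rule convex_connected[OF convex_line_preimage[OF assms(2)]])
  have L01: "0 \<in> L" "1 \<in> L"
    using assms(6,8) by (simp_all add: L_def)
  have holF: "(\<lambda>l. F n (w + l *s (u - w))) holomorphic_on L" for n
    by (rule holomorphic_on_line[OF hol]) (simp add: L_def)
  have ulL: "uniform_limit K (\<lambda>n l. F n (w + l *s (u - w))) G sequentially" if "K \<subseteq> L" for K
    unfolding G_def using that
    by (intro uniform_limit_compose'[OF ul]) (auto simp: L_def)
  have "G holomorphic_on L"
  proof (rule holomorphic_uniform_sequence[OF \<open>open L\<close> holF])
    fix l assume "l \<in> L"
    then obtain d where "d > 0" "cball l d \<subseteq> L"
      using \<open>open L\<close> open_contains_cball by blast
    then show "\<exists>d>0. cball l d \<subseteq> L \<and> uniform_limit (cball l d) (\<lambda>n l. F n (w + l *s (u - w))) G sequentially"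
      using ulL by blast
  qed
  moreover have "G 0 = 0"
    using \<open>g w = 0\<close> by (simp add: G_def)
  ultimately have "G constant_on L"
    using Hurwitz_no_zeros[OF \<open>open L\<close> \<open>connected L\<close> holF _ ulL _ _ L01(1)] nz
    by (auto simp: L_def)
  then have "G 1 = G 0"
    using L01 by (metis constant_on_def)
  with \<open>G 0 = 0\<close> show ?thesis
    by (simp add: G_def)
qed

lemma uniform_limit_tendsto_along:
  fixes g :: "'a::topological_space \<Rightarrow> 'b::real_normed_vector"
  assumes ul: "uniform_limit S f g F" and "continuous_on S g"
    and "(W \<longlongrightarrow> w) F" "w \<in> S" "\<forall>\<^sub>F n in F. W n \<in> S"
  shows "((\<lambda>n. f n (W n)) \<longlongrightarrow> g w) F"
proof (rule Lim_transform)
  show "((\<lambda>n. g (W n)) \<longlongrightarrow> g w) F"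
    using assms(2-5) by (rule continuous_on_tendsto_compose)
  show "((\<lambda>n. f n (W n) - g (W n)) \<longlongrightarrow> 0) F"
  proof (rule tendstoI)
    fix e :: real assume "e > 0"
    from uniform_limitD[OF ul this] \<open>\<forall>\<^sub>F n in F. W n \<in> S\<close>
    show "\<forall>\<^sub>F n in F. dist (f n (W n) - g (W n)) 0 < e"
      by eventually_elim (simp add: dist_norm)
  qed
qed

lemma translates_tendsto_zero_imp_zero:
  fixes f :: "complex^'n \<Rightarrow> 'a::real_normed_vector"
  assumes ul: "uniform_limit (tube B) (\<lambda>n z. f (rtrans z (t n))) (\<lambda>_. 0) F"
    and "F \<noteq> bot" "z \<in> tube B"
  shows "f z = 0"
proof (rule ccontr)
  assume "f z \<noteq> 0"
  with uniform_limitD[OF ul]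
  have "\<forall>\<^sub>F n in F. \<forall>u\<in>tube B. norm (f (rtrans u (t n))) < norm (f z)"
    by simp
  then have "\<forall>\<^sub>F n in F. norm (f z) < norm (f z)"
  proof (rule eventually_mono)
    fix n assume "\<forall>u\<in>tube B. norm (f (rtrans u (t n))) < norm (f z)"
    from this[rule_format, of "rtrans z (- t n)"] \<open>z \<in> tube B\<close>
    show "norm (f z) < norm (f z)"
      by simp
  qed
  with \<open>F \<noteq> bot\<close> show False
    by (simp add: eventually_const_iff)
qed

lemma Diff_amoeba: "\<Omega> - amoeba \<Omega> f = \<Omega> - closure {y \<in> \<Omega>. \<exists>x. f (cvec x y) = 0}"
  by (auto simp: amoeba_def)

lemma open_amoeba_component:
  assumes "open \<Omega>" "D \<in> components (\<Omega> - amoeba \<Omega> f)"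
  shows "open D"
proof -
  have "open (\<Omega> - amoeba \<Omega> f)"
    unfolding Diff_amoeba using assms(1) by (intro open_Diff closed_closure)
  then show ?thesis
    using open_components assms(2) by auto
qed

lemma amoeba_component_nonzero:
  assumes "D \<in> components (\<Omega> - amoeba \<Omega> f)" "im_part z \<in> D"
  shows "f z \<noteq> 0"
proof
  assume "f z = 0"
  from subsetD[OF in_components_subset[OF assms(1)] assms(2)]
  have "im_part z \<in> \<Omega>" "im_part z \<notin> closure {y \<in> \<Omega>. \<exists>x. f (cvec x y) = 0}"
    unfolding Diff_amoeba by simp_all
  moreover have "f (cvec (re_part z) (im_part z)) = 0"
    using \<open>f z = 0\<close> by simp
  ultimately have "im_part z \<in> {y \<in> \<Omega>. \<exists>x. f (cvec x y) = 0}"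
    by blast
  then have "im_part z \<in> closure {y \<in> \<Omega>. \<exists>x. f (cvec x y) = 0}"
    by (rule subsetD[OF closure_subset])
  with \<open>im_part z \<notin> closure {y \<in> \<Omega>. \<exists>x. f (cvec x y) = 0}\<close> show False
    by contradiction
qed

lemma AP_translate_holomorphic:
  assumes "f \<in> AP \<Omega>" "open B" "B \<Subset> \<Omega>"
  shows "holomorphic_several (\<lambda>z. f (rtrans z t)) (tube B)"
proof -
  have "tube B \<subseteq> tube \<Omega>"
    using assms(3) closure_subset[of B] by (auto simp: compactly_contained_def intro!: tube_mono)
  moreover have "holomorphic_several f (tube \<Omega>)"
    using assms(1) by (simp add: AP_def)
  ultimately show ?thesis
    unfolding rtrans_def
    by (intro holomorphic_several_shift[OF _ open_tube[OF assms(2)]]) (auto simp flip: rtrans_def)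
qed

lemma AP_vanishes_in_tube:
  assumes "f \<in> AP \<Omega>" "open B" "convex B" "B \<Subset> \<Omega>" "y \<in> B"
    and "(\<lambda>n. im_part (Z n)) \<longlonglongrightarrow> y" "(\<lambda>n. f (Z n)) \<longlonglongrightarrow> 0"
  shows "\<exists>z\<in>tube B. f z = 0"
proof (rule ccontr)
  assume "\<not> ?thesis"
  then have nz: "\<And>z. z \<in> tube B \<Longrightarrow> f z \<noteq> 0"
    by blast
  obtain r g where "strict_mono r"
    and ul: "uniform_limit (tube B) (\<lambda>n z. f (rtrans z (re_part (Z (r n))))) g sequentially"
    using assms(1,4) unfolding AP_def mem_Collect_eq
    by (blast dest: spec[of _ "\<lambda>n. re_part (Z n)"])
  define F where "F n z = f (rtrans z (re_part (Z (r n))))" for n z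
  have ulF: "uniform_limit (tube B) F g sequentially"
    using ul by (simp add: F_def[abs_def])
  have holF: "holomorphic_several (F n) (tube B)" for n
    unfolding F_def using AP_translate_holomorphic[OF assms(1,2,4)] .
  have "continuous_on (tube B) g"
    using holF by (intro uniform_limit_theorem[OF _ ulF]) (auto simp: holomorphic_several_imp_continuous_on)
  define W where "W n = cvec 0 (im_part (Z (r n)))" for n
  from LIMSEQ_subseq_LIMSEQ[OF assms(6) \<open>strict_mono r\<close>]
  have lim_im: "(\<lambda>n. im_part (Z (r n))) \<longlonglongrightarrow> y"
    by (simp add: o_def)
  then have "W \<longlonglongrightarrow> cvec 0 y"
    unfolding W_def cvec_def by (intro tendsto_intros tendsto_vec_nth lim_im)
  moreover have "cvec 0 y \<in> tube B"
    using assms(5) by (simp add: tube_def)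
  moreover have "\<forall>\<^sub>F n in sequentially. W n \<in> tube B"
    using topological_tendstoD[OF lim_im assms(2,5)] by (simp add: W_def tube_def)
  ultimately have "(\<lambda>n. F n (W n)) \<longlonglongrightarrow> g (cvec 0 y)"
    by (rule uniform_limit_tendsto_along[OF ulF \<open>continuous_on (tube B) g\<close>])
  moreover have "(\<lambda>n. F n (W n)) \<longlonglongrightarrow> 0"
    using LIMSEQ_subseq_LIMSEQ[OF assms(7) \<open>strict_mono r\<close>]
    by (simp add: F_def W_def rtrans_cvec_0 o_def)
  ultimately have "g (cvec 0 y) = 0"
    using LIMSEQ_unique by blast
  have nzF: "F n z \<noteq> 0" if "z \<in> tube B" for n z
    using nz that by (simp add: F_def)
  have "g u = 0" if "u \<in> tube B" for u
    by (rule Hurwitz_convex_vanishes[OF open_tube[OF assms(2)] convex_tube[OF assms(3)]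
          holF nzF ulF \<open>cvec 0 y \<in> tube B\<close> \<open>g (cvec 0 y) = 0\<close> that])
  then have "uniform_limit (tube B) (\<lambda>n z. f (rtrans z (re_part (Z (r n))))) (\<lambda>_. 0) sequentially"
    using ul by (simp cong: uniform_limit_cong')
  from translates_tendsto_zero_imp_zero[OF this sequentially_bot \<open>cvec 0 y \<in> tube B\<close>]
  show False
    using nz[OF \<open>cvec 0 y \<in> tube B\<close>] by contradiction
qed

lemma null_sequence_if_not_bounded_below:
  fixes f :: "'a \<Rightarrow> 'b::real_normed_vector"
  assumes "\<not> (\<exists>\<beta>>0. \<forall>z\<in>S. norm (f z) \<ge> \<beta>)"
  obtains Z where "\<And>n. Z n \<in> S" "(\<lambda>n. f (Z n)) \<longlonglongrightarrow> 0"
proof -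
  have "\<forall>n. \<exists>z\<in>S. norm (f z) < inverse (real (Suc n))"
    using assms by (metis not_le of_nat_0_less_iff positive_imp_inverse_positive zero_less_Suc)
  then obtain Z where "\<And>n. Z n \<in> S" "\<And>n. norm (f (Z n)) < inverse (real (Suc n))"
    by metis
  moreover from this(2) have "(\<lambda>n. f (Z n)) \<longlonglongrightarrow> 0"
    by (intro Lim_null_comparison[OF always_eventually LIMSEQ_inverse_real_of_nat] allI less_imp_le)
  ultimately show ?thesis
    using that by blast
qed

lemma AP_bounded_below_on_tube:
  assumes "f \<in> AP \<Omega>" "open D" "D \<subseteq> \<Omega>" "\<And>z. z \<in> tube D \<Longrightarrow> f z \<noteq> 0"
    and "compact K" "K \<subseteq> D"
  shows "\<exists>\<beta>>0. \<forall>z\<in>tube K. norm (f z) \<ge> \<beta>"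
proof (rule ccontr)
  assume "\<not> ?thesis"
  then obtain Z where "\<And>n. Z n \<in> tube K" and lim_f: "(\<lambda>n. f (Z n)) \<longlonglongrightarrow> 0"
    by (rule null_sequence_if_not_bounded_below) blast
  then have "\<forall>n. im_part (Z n) \<in> K"
    by (simp add: tube_def)
  then obtain y r where "y \<in> K" "strict_mono r" and lim_im: "((\<lambda>n. im_part (Z n)) \<circ> r) \<longlonglongrightarrow> y"
    by (rule seq_compactE[OF compact_imp_seq_compact[OF assms(5)]])
  obtain \<delta> where "\<delta> > 0" "cball y \<delta> \<subseteq> D"
    using open_contains_cball assms(2,6) \<open>y \<in> K\<close> by blast
  then have "ball y \<delta> \<Subset> \<Omega>" "y \<in> ball y \<delta>"
    using assms(3) by (auto simp: compactly_contained_def)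
  moreover have "(\<lambda>n. im_part ((Z \<circ> r) n)) \<longlonglongrightarrow> y" "(\<lambda>n. f ((Z \<circ> r) n)) \<longlonglongrightarrow> 0"
    using lim_im LIMSEQ_subseq_LIMSEQ[OF lim_f \<open>strict_mono r\<close>] by (simp_all add: o_def)
  ultimately obtain z where "z \<in> tube (ball y \<delta>)" "f z = 0"
    using AP_vanishes_in_tube[OF assms(1) open_ball convex_ball] by blast
  moreover have "tube (ball y \<delta>) \<subseteq> tube D"
    using \<open>cball y \<delta> \<subseteq> D\<close> ball_subset_cball[of y \<delta>] by (intro tube_mono) blast
  ultimately show False
    using assms(4) by blast
qed

theorem mainTheorem4:
  fixes \<Omega> D0 D0' :: "(real^'n) set" and f :: "complex^'n \<Rightarrow> complex"
  assumes "open \<Omega>" and "connected \<Omega>" and "\<Omega> \<noteq> {}"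
    and "f \<in> AP \<Omega>"
    and "\<exists>z\<in>tube \<Omega>. f z \<noteq> 0"
    and "D0 \<in> components (\<Omega> - amoeba \<Omega> f)"
    and "D0' \<Subset> D0"
  shows "\<exists>\<beta>>0. \<forall>z\<in>tube D0'. norm (f z) \<ge> \<beta>"
proof -
  have "D0 \<subseteq> \<Omega>"
    using in_components_subset[OF assms(6)] by blast
  moreover have "\<And>z. z \<in> tube D0 \<Longrightarrow> f z \<noteq> 0"
    using amoeba_component_nonzero[OF assms(6)] by (simp add: tube_def)
  ultimately have "\<exists>\<beta>>0. \<forall>z\<in>tube (closure D0'). norm (f z) \<ge> \<beta>"
    using assms(7) unfolding compactly_contained_def
    by (intro AP_bounded_below_on_tube[OF assms(4) open_amoeba_component[OF assms(1,6)]]) auto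
  then show ?thesis
    using tube_mono[OF closure_subset[of D0']] by blast
qed

end
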